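(* For every $\delta>0$ there exist an unweighted congestion game $\mathcal{G}_1$ with quadratic latency functions and an unweighted congestion game $\mathcal{G}_2$ with cubic latency functions such that $\mathrm{PoS}(\mathcal{G}_1)\ge 2.1859-\delta$ and $\mathrm{PoS}(\mathcal{G}_2)\ge 2.7558-\delta$.
   Context: A weighted congestion game consists of a finite set $[n]=\{1,\dots,n\}$ of players, a finite set $E$ of resources, for each player $i$ a weight $w_i>0$ and a nonempty finite strategy set $\Sigma_i\subseteq 2^E$, and for each resource $e$ a latency function $\ell_e:\mathbb{R}_{\ge 0}\to\mathbb{R}_{\ge 0}$. It is unweighted if $w_i=1$ for all $i$. Quadratic (resp. cubic) latency functions means $\ell_e(x)=\sum_{j=0}^{d}\alpha_{e,j}x^j$ with all $\alpha_{e,j}\ge 0$ and $d=2$ (resp. $d=3$). For a strategy profile $S=(s_1,\dots,s_n)$, the congestion of $e$ is $L_e(S)=\sum_{i:\,e\in s_i}w_i$, the cost of player $i$ is $c_i(S)=\sum_{e\in s_i}\ell_e(L_e(S))$, and $\mathrm{SUM}(S)=\sum_i c_i(S)$; $S^*$ minimizes $\mathrm{SUM}$. A pure Nash equilibrium (PNE) is a profile $S$ with $c_i(S)\le c_i(S_{-i}\diamond t)$ for all $i$ and $t\in\Sigma_i$, where $(S_{-i}\diamond t)$ replaces $s_i$ by $t$. $\mathrm{PoS}(\mathcal{G})=\min_{S\ \mathrm{PNE}}\mathrm{SUM}(S)/\mathrm{SUM}(S^* )$. *)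

theory Defs
  imports Main "HOL.Real"
begin

(* A strategy profile is a function S :: nat => nat set with S i in Sig i for i < n
   (and S i = {} for i >= n, for extensionality). *)

definition congestion_game ::
  "nat \<Rightarrow> (nat \<Rightarrow> real) \<Rightarrow> nat set \<Rightarrow> (nat \<Rightarrow> nat set set) \<Rightarrow> (nat \<Rightarrow> real \<Rightarrow> real) \<Rightarrow> bool" where
  "congestion_game n w E Sig lat \<longleftrightarrow>
     finite E \<and>
     (\<forall>i<n. w i > 0 \<and> Sig i \<noteq> {} \<and> finite (Sig i) \<and> (\<forall>s\<in>Sig i. s \<subseteq> E)) \<and>
     (\<forall>e\<in>E. \<forall>x\<ge>0. lat e x \<ge> 0)"

definition unweighted :: "nat \<Rightarrow> (nat \<Rightarrow> real) \<Rightarrow> bool" where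
  "unweighted n w \<longleftrightarrow> (\<forall>i<n. w i = 1)"

definition poly_latencies :: "nat \<Rightarrow> nat set \<Rightarrow> (nat \<Rightarrow> real \<Rightarrow> real) \<Rightarrow> bool" where
  "poly_latencies d E lat \<longleftrightarrow>
     (\<forall>e\<in>E. \<exists>\<alpha> :: nat \<Rightarrow> real. (\<forall>j. \<alpha> j \<ge> 0) \<and>
        (\<forall>x\<ge>0. lat e x = (\<Sum>j\<le>d. \<alpha> j * x ^ j)))"

definition profiles :: "nat \<Rightarrow> (nat \<Rightarrow> nat set set) \<Rightarrow> (nat \<Rightarrow> nat set) set" where
  "profiles n Sig = {S. (\<forall>i<n. S i \<in> Sig i) \<and> (\<forall>i\<ge>n. S i = {})}"

definition congestion :: "nat \<Rightarrow> (nat \<Rightarrow> real) \<Rightarrow> (nat \<Rightarrow> nat set) \<Rightarrow> nat \<Rightarrow> real" where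
  "congestion n w S e = (\<Sum>i\<in>{i. i < n \<and> e \<in> S i}. w i)"

definition player_cost ::
  "nat \<Rightarrow> (nat \<Rightarrow> real) \<Rightarrow> (nat \<Rightarrow> real \<Rightarrow> real) \<Rightarrow> (nat \<Rightarrow> nat set) \<Rightarrow> nat \<Rightarrow> real" where
  "player_cost n w lat S i = (\<Sum>e\<in>S i. lat e (congestion n w S e))"

definition SUM_cost ::
  "nat \<Rightarrow> (nat \<Rightarrow> real) \<Rightarrow> (nat \<Rightarrow> real \<Rightarrow> real) \<Rightarrow> (nat \<Rightarrow> nat set) \<Rightarrow> real" where
  "SUM_cost n w lat S = (\<Sum>i<n. player_cost n w lat S i)"

definition is_PNE ::
  "nat \<Rightarrow> (nat \<Rightarrow> real) \<Rightarrow> (nat \<Rightarrow> nat set set) \<Rightarrow> (nat \<Rightarrow> real \<Rightarrow> real) \<Rightarrow> (nat \<Rightarrow> nat set) \<Rightarrow> bool" where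
  "is_PNE n w Sig lat S \<longleftrightarrow> S \<in> profiles n Sig \<and>
     (\<forall>i<n. \<forall>t\<in>Sig i. player_cost n w lat S i \<le> player_cost n w lat (S(i := t)) i)"

definition OPT ::
  "nat \<Rightarrow> (nat \<Rightarrow> real) \<Rightarrow> (nat \<Rightarrow> nat set set) \<Rightarrow> (nat \<Rightarrow> real \<Rightarrow> real) \<Rightarrow> real" where
  "OPT n w Sig lat = Min (SUM_cost n w lat ` profiles n Sig)"

definition PoS ::
  "nat \<Rightarrow> (nat \<Rightarrow> real) \<Rightarrow> (nat \<Rightarrow> nat set set) \<Rightarrow> (nat \<Rightarrow> real \<Rightarrow> real) \<Rightarrow> real" where
  "PoS n w Sig lat =
     Min {SUM_cost n w lat S / OPT n w Sig lat | S. is_PNE n w Sig lat S}"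

end

theory Submission
  imports Defs "HOL-Library.Nat_Bijection"
begin

(* The witness is a single game family with 12 players and parameters (d, c, a, b): every player
   i can play P_strat i (use the pair resources (i,j) and the triples of players avoiding i) or
   Q_strat i (use an own resource of cost c, the pair resources (j,i) and the triples through i).
   Counting the triples by their intersection with the set of Q-players gives closed forms
   cost_P k and cost_Q k for the cost of a player when k others play Q.  If cost_P k < cost_Q k
   for all k, P_strat is strictly dominant, so all-P is the unique equilibrium and
   PoS >= 12 cost_P 0 / (12 cost_Q 11), the second term being the cost of all-Q. *)

lemma PNE_of_strictly_dominant:
  assumes p: "p \<in> profiles n Sig"
    and dom: "\<And>S i t. S \<in> profiles n Sig \<Longrightarrow> i < n \<Longrightarrow> t \<in> Sig i \<Longrightarrow> t \<noteq> p i \<Longrightarrow>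
               player_cost n w lat (S(i := p i)) i < player_cost n w lat (S(i := t)) i"
  shows "is_PNE n w Sig lat p" and "is_PNE n w Sig lat S \<Longrightarrow> S = p"
proof -
  show "is_PNE n w Sig lat p"
    unfolding is_PNE_def
  proof (intro conjI p allI impI ballI)
    fix i t assume "i < n" "t \<in> Sig i"
    then show "player_cost n w lat p i \<le> player_cost n w lat (p(i := t)) i"
      using dom[OF p, of i t] by (cases "t = p i") (auto simp: less_imp_le)
  qed
next
  assume S: "is_PNE n w Sig lat S"
  then have S_prof: "S \<in> profiles n Sig" unfolding is_PNE_def by blast
  show "S = p"
  proof
    fix i
    show "S i = p i"
    proof (cases "i < n")
      case True
      have "S i \<in> Sig i" using S_prof True unfolding profiles_def by blast
      show ?thesis
      proof (rule ccontr)
        assume "S i \<noteq> p i"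
        then have "player_cost n w lat (S(i := p i)) i < player_cost n w lat S i"
          using dom[OF S_prof True \<open>S i \<in> Sig i\<close>] by simp
        moreover have "p i \<in> Sig i" using p True unfolding profiles_def by blast
        ultimately show False using S True unfolding is_PNE_def by fastforce
      qed
    next
      case False
      then show ?thesis using S_prof p unfolding profiles_def by simp
    qed
  qed
qed

(* With a unique equilibrium p, the price of stability is SUM(p)/OPT, so the cost ratio of p
   against any single profile q bounds it from below (OPT is attained, hence positive). *)
lemma PoS_lower_bound:
  assumes fin: "finite (profiles n Sig)"
    and p_PNE: "is_PNE n w Sig lat p"
    and unique: "\<And>S. is_PNE n w Sig lat S \<Longrightarrow> S = p"
    and q: "q \<in> profiles n Sig"
    and pos: "\<And>S. S \<in> profiles n Sig \<Longrightarrow> 0 < SUM_cost n w lat S"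
  shows "SUM_cost n w lat p / SUM_cost n w lat q \<le> PoS n w Sig lat"
proof -
  let ?costs = "SUM_cost n w lat ` profiles n Sig"
  have "OPT n w Sig lat \<in> ?costs"
    unfolding OPT_def using fin q by (intro Min_in) auto
  then have OPT_pos: "0 < OPT n w Sig lat" using pos by auto
  have OPT_le: "OPT n w Sig lat \<le> SUM_cost n w lat q"
    unfolding OPT_def using fin q by (intro Min_le) auto
  have "{SUM_cost n w lat S / OPT n w Sig lat | S. is_PNE n w Sig lat S}
          = {SUM_cost n w lat p / OPT n w Sig lat}"
    using p_PNE unique by blast
  then have "PoS n w Sig lat = SUM_cost n w lat p / OPT n w Sig lat"
    unfolding PoS_def by simp
  moreover have "0 \<le> SUM_cost n w lat p"
    using pos p_PNE unfolding is_PNE_def by (simp add: less_imp_le)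
  ultimately show ?thesis
    using OPT_pos OPT_le by (simp add: divide_left_mono)
qed

lemma poly_latencies_monomials:
  assumes "\<And>e. e \<in> E \<Longrightarrow> \<exists>co j. 0 \<le> co \<and> j \<le> d \<and> (\<forall>x\<ge>0. lat e x = co * x ^ j)"
  shows "poly_latencies d E lat"
  unfolding poly_latencies_def
proof
  fix e assume "e \<in> E"
  then obtain co j where co: "0 \<le> co" "j \<le> d" "\<forall>x\<ge>0. lat e x = co * x ^ j"
    using assms by blast
  have "(\<Sum>k\<le>d. (if k = j then co else 0) * x ^ k) = co * x ^ j" for x :: real
  proof -
    have "(\<Sum>k\<le>d. (if k = j then co else 0) * x ^ k) = (\<Sum>k\<le>d. if k = j then co * x ^ j else 0)"
      by (rule sum.cong) auto
    then show ?thesis using co(2) by simp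
  qed
  then show "\<exists>\<alpha>::nat\<Rightarrow>real. (\<forall>k. 0 \<le> \<alpha> k) \<and> (\<forall>x\<ge>0. lat e x = (\<Sum>k\<le>d. \<alpha> k * x ^ k))"
    using co by (intro exI[of _ "\<lambda>k. if k = j then co else 0"]) auto
qed

lemma card_subsets_by_intersection:
  assumes fin: "finite M" and KM: "K \<subseteq> M" and tr: "t \<le> r"
  shows "card {B. B \<subseteq> M \<and> card B = r \<and> card (B \<inter> K) = t}
         = (card K choose t) * (card (M - K) choose (r - t))"
proof -
  let ?A = "{X. X \<subseteq> K \<and> card X = t}"
  let ?C = "{Y. Y \<subseteq> M - K \<and> card Y = r - t}"
  have finK: "finite K" using fin KM finite_subset by blast
  have finMK: "finite (M - K)" using fin by blast
  have split: "{B. B \<subseteq> M \<and> card B = r \<and> card (B \<inter> K) = t} = (\<lambda>(X,Y). X \<union> Y) ` (?A \<times> ?C)"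
  proof (rule set_eqI, rule iffI)
    fix B assume "B \<in> {B. B \<subseteq> M \<and> card B = r \<and> card (B \<inter> K) = t}"
    then have B: "B \<subseteq> M" "card B = r" "card (B \<inter> K) = t" by auto
    have "finite B" using B(1) fin finite_subset by blast
    then have "card B = card (B \<inter> K) + card (B - K)" by (rule card_Int_Diff)
    then have "card (B - K) = r - t" using B by simp
    then have "(B \<inter> K, B - K) \<in> ?A \<times> ?C" using B by auto
    moreover have "B = (\<lambda>(X,Y). X \<union> Y) (B \<inter> K, B - K)" by auto
    ultimately show "B \<in> (\<lambda>(X,Y). X \<union> Y) ` (?A \<times> ?C)" by blast
  next
    fix B assume "B \<in> (\<lambda>(X,Y). X \<union> Y) ` (?A \<times> ?C)"
    then obtain X Y where XY: "X \<subseteq> K" "card X = t" "Y \<subseteq> M - K" "card Y = r - t" and BXY: "B = X \<union> Y" by auto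
    have fX: "finite X" using XY finK finite_subset by blast
    have fY: "finite Y" using XY finMK finite_subset by blast
    have dis: "X \<inter> Y = {}" using XY by auto
    have "card B = r" using BXY card_Un_disjoint[OF fX fY dis] XY tr by simp
    moreover have "B \<inter> K = X" using XY BXY by auto
    ultimately show "B \<in> {B. B \<subseteq> M \<and> card B = r \<and> card (B \<inter> K) = t}" using XY BXY KM by auto
  qed
  have inj: "inj_on (\<lambda>(X,Y). X \<union> Y) (?A \<times> ?C)"
  proof (rule inj_onI, clarify)
    fix X Y X' Y' assume "X \<subseteq> K" "Y \<subseteq> M - K" "X' \<subseteq> K" "Y' \<subseteq> M - K" "X \<union> Y = X' \<union> Y'"
    then show "X = X' \<and> Y = Y'" by blast
  qed
  show ?thesis unfolding split card_image[OF inj] card_cartesian_product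
    using n_subsets[OF finK] n_subsets[OF finMK] by simp
qed

lemma sum_subsets_by_intersection:
  fixes g :: "nat \<Rightarrow> real"
  assumes fin: "finite M" and KM: "K \<subseteq> M"
  shows "(\<Sum>B | B \<subseteq> M \<and> card B = r. g (card (B \<inter> K)))
       = (\<Sum>t\<le>r. real (card K choose t) * real (card (M - K) choose (r - t)) * g t)"
proof -
  let ?F = "{B. B \<subseteq> M \<and> card B = r}"
  have "(\<lambda>B. card (B \<inter> K)) ` ?F \<subseteq> {..r}"
    using fin by (auto simp: finite_subset card_mono)
  then have "(\<Sum>B\<in>?F. g (card (B \<inter> K)))
        = (\<Sum>t\<le>r. \<Sum>B\<in>{B \<in> ?F. card (B \<inter> K) = t}. g (card (B \<inter> K)))"
    using sum.group[of ?F "{..r}" "\<lambda>B. card (B \<inter> K)" "\<lambda>B. g (card (B \<inter> K))"] fin by simp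
  also have "\<dots> = (\<Sum>t\<le>r. real (card {B \<in> ?F. card (B \<inter> K) = t}) * g t)"
    by (rule sum.cong) auto
  also have "\<dots> = (\<Sum>t\<le>r. real (card K choose t) * real (card (M - K) choose (r - t)) * g t)"
    using card_subsets_by_intersection[OF fin KM] by (intro sum.cong) (simp_all add: conj_assoc)
  finally show ?thesis .
qed

(* The lower-bound game: players 0..11 (each also the name of the player's own resource),
   a resource pair_res j i for every ordered pair of players, and a resource triple_res B for
   every 3-set of players. Resource numbers: own resources < 12, pair resources in [12,156),
   triple resources >= 156. *)
definition Players :: "nat set" where
  "Players = {..<12}"

definition Triples :: "nat set set" where
  "Triples = {B. B \<subseteq> Players \<and> card B = 3}"

definition pair_res :: "nat \<Rightarrow> nat \<Rightarrow> nat" where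
  "pair_res j i = 12 + 12 * j + i"

definition triple_res :: "nat set \<Rightarrow> nat" where
  "triple_res B = 156 + set_encode B"

(* The equilibrium strategy of i: its outgoing pair resources and the triples avoiding i. *)
definition P_strat :: "nat \<Rightarrow> nat set" where
  "P_strat i = pair_res i ` (Players - {i}) \<union> triple_res ` {B \<in> Triples. i \<notin> B}"

(* The optimal strategy of i: its own resource, its incoming pair resources and the triples
   containing i. *)
definition Q_strat :: "nat \<Rightarrow> nat set" where
  "Q_strat i = insert i ((\<lambda>j. pair_res j i) ` (Players - {i}) \<union> triple_res ` {B \<in> Triples. i \<in> B})"

definition strategies :: "nat \<Rightarrow> nat set set" where
  "strategies i = {P_strat i, Q_strat i}"

definition resources :: "nat set" where
  "resources = Players \<union> case_prod pair_res ` (Players \<times> Players) \<union> triple_res ` Triples"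

definition latency :: "nat \<Rightarrow> real \<Rightarrow> real \<Rightarrow> real \<Rightarrow> nat \<Rightarrow> real \<Rightarrow> real" where
  "latency d c a b e x = (if e < 12 then c else if e < 156 then a * x ^ d else b * x ^ d)"

definition profile :: "nat set \<Rightarrow> nat \<Rightarrow> nat set" where
  "profile X i = (if i < 12 then if i \<in> X then Q_strat i else P_strat i else {})"

lemma Players_iff: "l \<in> Players \<longleftrightarrow> l < 12"
  by (simp add: Players_def)

lemma finite_Players [simp]: "finite Players" and card_Players [simp]: "card Players = 12"
  by (simp_all add: Players_def)

lemma finite_Triples: "finite Triples"
  unfolding Triples_def by simp

lemma Triples_finite: "B \<in> Triples \<Longrightarrow> finite B"
  unfolding Triples_def by (auto intro: finite_subset[OF _ finite_Players])

lemma pair_res_range: "j < 12 \<Longrightarrow> i < 12 \<Longrightarrow> 12 \<le> pair_res j i \<and> pair_res j i < 156"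
  unfolding pair_res_def by simp

lemma triple_res_ge: "156 \<le> triple_res B"
  unfolding triple_res_def by simp

lemma pair_res_eq_iff:
  assumes "j < 12" "i < 12" "j' < 12" "i' < 12"
  shows "pair_res j i = pair_res j' i' \<longleftrightarrow> j = j' \<and> i = i'"
proof
  assume "pair_res j i = pair_res j' i'"
  then have eq: "12 * j + i = 12 * j' + i'" unfolding pair_res_def by simp
  have "j = (12 * j + i) div 12" using assms by simp
  also have "\<dots> = (12 * j' + i') div 12" using eq by simp
  also have "\<dots> = j'" using assms by simp
  finally show "j = j' \<and> i = i'" using eq by simp
qed simp

lemma pair_res_ne_triple_res: "j < 12 \<Longrightarrow> i < 12 \<Longrightarrow> pair_res j i \<noteq> triple_res B"
  using pair_res_range triple_res_ge by (metis not_le)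

lemma triple_res_eq_iff: "finite B \<Longrightarrow> finite B' \<Longrightarrow> triple_res B = triple_res B' \<longleftrightarrow> B = B'"
  unfolding triple_res_def by (simp add: set_encode_eq)

lemma pair_res_in_P_strat:
  assumes "j \<in> Players" "i \<in> Players" "l \<in> Players"
  shows "pair_res j i \<in> P_strat l \<longleftrightarrow> l = j \<and> i \<noteq> j"
  using assms pair_res_ne_triple_res pair_res_eq_iff
  unfolding P_strat_def by (auto simp: Players_iff)

lemma pair_res_in_Q_strat:
  assumes "j \<in> Players" "i \<in> Players" "l \<in> Players"
  shows "pair_res j i \<in> Q_strat l \<longleftrightarrow> l = i \<and> i \<noteq> j"
  using assms pair_res_ne_triple_res pair_res_eq_iff pair_res_range[of j i]
  unfolding Q_strat_def by (auto simp: Players_iff)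

lemma triple_res_in_P_strat:
  assumes "B \<in> Triples" "l \<in> Players"
  shows "triple_res B \<in> P_strat l \<longleftrightarrow> l \<notin> B"
  using assms pair_res_ne_triple_res triple_res_eq_iff Triples_finite
  unfolding P_strat_def by (auto simp: Players_iff) metis

lemma triple_res_in_Q_strat:
  assumes "B \<in> Triples" "l \<in> Players"
  shows "triple_res B \<in> Q_strat l \<longleftrightarrow> l \<in> B"
  using assms pair_res_ne_triple_res triple_res_eq_iff Triples_finite triple_res_ge[of B]
  unfolding Q_strat_def by (auto simp: Players_iff) metis

abbreviation load :: "nat set \<Rightarrow> nat \<Rightarrow> real" where
  "load X \<equiv> congestion 12 (\<lambda>_. 1) (profile X)"

lemma load_eq_card: "load X e = real (card {l \<in> Players. e \<in> profile X l})"
  unfolding congestion_def by (simp add: Players_iff)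

(* Resource pair_res j i is used by i if i plays Q and by j if j plays P. *)
lemma load_pair_res:
  assumes "j \<in> Players" "i \<in> Players" "i \<noteq> j"
  shows "load X (pair_res j i) = of_bool (i \<in> X) + of_bool (j \<notin> X)"
proof -
  have "{l \<in> Players. pair_res j i \<in> profile X l} = (if i \<in> X then {i} else {}) \<union> (if j \<notin> X then {j} else {})"
    using assms pair_res_in_P_strat[OF assms(1,2)] pair_res_in_Q_strat[OF assms(1,2)]
    unfolding profile_def by (auto simp: Players_iff)
  then show ?thesis unfolding load_eq_card using assms(3) by auto
qed

lemma users_triple_res:
  assumes "B \<in> Triples" "X \<subseteq> Players"
  shows "{l \<in> Players. triple_res B \<in> profile X l} = (Players - (B \<union> X)) \<union> (B \<inter> X)"
proof (rule set_eqI)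
  fix l
  have "B \<subseteq> Players" using assms(1) unfolding Triples_def by simp
  then show "l \<in> {l \<in> Players. triple_res B \<in> profile X l} \<longleftrightarrow> l \<in> (Players - (B \<union> X)) \<union> (B \<inter> X)"
    using assms(2) triple_res_in_P_strat[OF assms(1), of l] triple_res_in_Q_strat[OF assms(1), of l]
    unfolding profile_def by (cases "l \<in> Players") (auto simp: Players_iff)
qed

(* Hence its load is (12 - |B| - |X| + |B \<inter> X|) + |B \<inter> X| = 9 - |X| + 2|B \<inter> X|. *)
lemma load_triple_res:
  assumes "B \<in> Triples" "X \<subseteq> Players"
  shows "load X (triple_res B) = 9 - real (card X) + 2 * real (card (B \<inter> X))"
proof -
  have B: "B \<subseteq> Players" "card B = 3"
    using assms(1) unfolding Triples_def by auto
  have fin: "finite B" "finite X"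
    using finite_subset[OF B(1)] finite_subset[OF assms(2)] by auto
  have "card (Players - (B \<union> X) \<union> (B \<inter> X)) = card (Players - (B \<union> X)) + card (B \<inter> X)"
    using fin by (intro card_Un_disjoint) auto
  also have "card (Players - (B \<union> X)) = 12 - card (B \<union> X)"
    using fin B assms(2) by (simp add: card_Diff_subset)
  finally have "card (Players - (B \<union> X) \<union> (B \<inter> X)) = 12 - card (B \<union> X) + card (B \<inter> X)" .
  moreover have "card (B \<union> X) + card (B \<inter> X) = card B + card X"
    using card_Un_Int[OF fin] by simp
  moreover have "card (B \<union> X) \<le> 12"
    using card_mono[of Players "B \<union> X"] B assms(2) by simp
  ultimately show ?thesis
    unfolding load_eq_card users_triple_res[OF assms] using B(2) by linarith
qed

(* cost_P k (resp. cost_Q k) is the cost of P_strat (resp. Q_strat) for a player when exactly k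
   of the other 11 players play Q_strat. *)
definition cost_P :: "nat \<Rightarrow> real \<Rightarrow> real \<Rightarrow> nat \<Rightarrow> real" where
  "cost_P d a b k = a * (real k * 2 ^ d + (11 - real k)) +
    (\<Sum>t\<le>3. real (k choose t) * real ((11 - k) choose (3 - t)) * (b * (9 - real k + 2 * real t) ^ d))"

definition cost_Q :: "nat \<Rightarrow> real \<Rightarrow> real \<Rightarrow> real \<Rightarrow> nat \<Rightarrow> real" where
  "cost_Q d c a b k = c + a * (real (11 - k) * 2 ^ d + real k) +
    (\<Sum>t\<le>2. real (k choose t) * real ((11 - k) choose (2 - t)) * (b * (10 - real k + 2 * real t) ^ d))"

lemma Triples_through:
  assumes i: "i \<in> Players"
  shows "{B \<in> Triples. i \<in> B} = insert i ` {B. B \<subseteq> Players - {i} \<and> card B = 2}"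
proof (rule set_eqI, rule iffI)
  fix B assume "B \<in> {B \<in> Triples. i \<in> B}"
  then have B: "B \<subseteq> Players" "card B = 3" "i \<in> B" unfolding Triples_def by auto
  then have "B - {i} \<in> {B. B \<subseteq> Players - {i} \<and> card B = 2}"
    using finite_subset[OF B(1)] by auto
  moreover have "B = insert i (B - {i})" using B by auto
  ultimately show "B \<in> insert i ` {B. B \<subseteq> Players - {i} \<and> card B = 2}" by blast
next
  fix B assume "B \<in> insert i ` {B. B \<subseteq> Players - {i} \<and> card B = 2}"
  then obtain B' where B': "B' \<subseteq> Players - {i}" "card B' = 2" "B = insert i B'" by blast
  moreover have "i \<notin> B'" using B'(1) by blast
  ultimately have "card B = 3" using finite_subset[OF B'(1)] by simp
  then show "B \<in> {B \<in> Triples. i \<in> B}" using B' i unfolding Triples_def by auto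
qed

lemma sum_if_card:
  assumes "finite M"
  shows "(\<Sum>j\<in>M. if j \<in> X then p else q) = real (card (M \<inter> X)) * p + real (card (M - X)) * (q::real)"
proof -
  have "(\<Sum>j\<in>M. if j \<in> X then p else q) = (\<Sum>j\<in>M \<inter> {x. x \<in> X}. p) + (\<Sum>j\<in>M \<inter> - {x. x \<in> X}. q)"
    by (rule sum.If_cases[OF assms])
  also have "M \<inter> {x. x \<in> X} = M \<inter> X" by auto
  also have "M \<inter> - {x. x \<in> X} = M - X" by auto
  finally show ?thesis by simp
qed

context
  fixes i :: nat and Y :: "nat set"
  assumes i: "i \<in> Players" and Y: "Y \<subseteq> Players - {i}"
begin

lemma Y_Players: "Y \<subseteq> Players" and i_notin_Y: "i \<notin> Y"
  using Y by blast+

lemma card_others: "card (Players - {i} - Y) = 11 - card Y" "card Y \<le> 11"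
proof -
  have "card (Players - {i}) = 11" using i by simp
  then show "card (Players - {i} - Y) = 11 - card Y" "card Y \<le> 11"
    using Y card_mono[OF _ Y] by (simp_all add: card_Diff_subset finite_subset[OF Y])
qed

(* Under P_strat i, the pair resource (i,j) has load 2 if j plays Q and 1 otherwise. *)
lemma pair_part_P:
  "(\<Sum>e\<in>pair_res i ` (Players - {i}). latency d c a b e (load Y e))
     = a * (real (card Y) * 2 ^ d + (11 - real (card Y)))"
proof -
  have "inj_on (pair_res i) (Players - {i})"
    using pair_res_eq_iff i by (auto simp: inj_on_def Players_iff)
  then have "(\<Sum>e\<in>pair_res i ` (Players - {i}). latency d c a b e (load Y e))
      = (\<Sum>j\<in>Players - {i}. latency d c a b (pair_res i j) (load Y (pair_res i j)))"
    by (simp add: sum.reindex)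
  also have "\<dots> = (\<Sum>j\<in>Players - {i}. if j \<in> Y then a * 2 ^ d else a)"
  proof (rule sum.cong)
    fix j assume j: "j \<in> Players - {i}"
    then have "load Y (pair_res i j) = of_bool (j \<in> Y) + 1"
      using load_pair_res[OF i, of j Y] Y by auto
    then show "latency d c a b (pair_res i j) (load Y (pair_res i j)) = (if j \<in> Y then a * 2 ^ d else a)"
      using pair_res_range[of i j] i j by (simp add: latency_def Players_iff)
  qed simp
  also have "\<dots> = a * (real (card Y) * 2 ^ d + (11 - real (card Y)))"
    using sum_if_card[of "Players - {i}" Y "a * 2 ^ d" a] card_others Y
    by (simp add: Int_absorb1 of_nat_diff algebra_simps)
  finally show ?thesis .
qed

(* Under Q_strat i, the pair resource (j,i) has load 1 if j plays Q and 2 otherwise. *)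
lemma pair_part_Q:
  "(\<Sum>e\<in>(\<lambda>j. pair_res j i) ` (Players - {i}). latency d c a b e (load (insert i Y) e))
     = a * (real (11 - card Y) * 2 ^ d + real (card Y))"
proof -
  have "inj_on (\<lambda>j. pair_res j i) (Players - {i})"
    using pair_res_eq_iff i by (auto simp: inj_on_def Players_iff)
  then have "(\<Sum>e\<in>(\<lambda>j. pair_res j i) ` (Players - {i}). latency d c a b e (load (insert i Y) e))
      = (\<Sum>j\<in>Players - {i}. latency d c a b (pair_res j i) (load (insert i Y) (pair_res j i)))"
    by (simp add: sum.reindex)
  also have "\<dots> = (\<Sum>j\<in>Players - {i}. if j \<in> Y then a else a * 2 ^ d)"
  proof (rule sum.cong)
    fix j assume j: "j \<in> Players - {i}"
    then have "load (insert i Y) (pair_res j i) = 1 + of_bool (j \<notin> Y)"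
      using load_pair_res[OF _ i, of j "insert i Y"] by auto
    then show "latency d c a b (pair_res j i) (load (insert i Y) (pair_res j i))
        = (if j \<in> Y then a else a * 2 ^ d)"
      using pair_res_range[of j i] i j by (simp add: latency_def Players_iff)
  qed simp
  also have "\<dots> = a * (real (11 - card Y) * 2 ^ d + real (card Y))"
    using sum_if_card[of "Players - {i}" Y a "a * 2 ^ d"] card_others Y
    by (simp add: Int_absorb1 algebra_simps)
  finally show ?thesis .
qed

(* The triples avoiding i are the 3-subsets of the other players; group them by |B \<inter> Y|. *)
lemma triple_part_P:
  "(\<Sum>e\<in>triple_res ` {B \<in> Triples. i \<notin> B}. latency d c a b e (load Y e))
     = (\<Sum>t\<le>3. real (card Y choose t) * real ((11 - card Y) choose (3 - t))
                  * (b * (9 - real (card Y) + 2 * real t) ^ d))"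
proof -
  let ?M = "Players - {i}"
  have T: "{B \<in> Triples. i \<notin> B} = {B. B \<subseteq> ?M \<and> card B = 3}"
    unfolding Triples_def by auto
  have "inj_on triple_res {B \<in> Triples. i \<notin> B}"
    using triple_res_eq_iff Triples_finite by (auto simp: inj_on_def)
  then have "(\<Sum>e\<in>triple_res ` {B \<in> Triples. i \<notin> B}. latency d c a b e (load Y e))
      = (\<Sum>B | B \<subseteq> ?M \<and> card B = 3. latency d c a b (triple_res B) (load Y (triple_res B)))"
    by (simp add: sum.reindex T)
  also have "\<dots> = (\<Sum>B | B \<subseteq> ?M \<and> card B = 3. b * (9 - real (card Y) + 2 * real (card (B \<inter> Y))) ^ d)"
  proof (rule sum.cong)
    fix B assume "B \<in> {B. B \<subseteq> ?M \<and> card B = 3}"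
    then have "B \<in> Triples" unfolding Triples_def by auto
    then show "latency d c a b (triple_res B) (load Y (triple_res B))
        = b * (9 - real (card Y) + 2 * real (card (B \<inter> Y))) ^ d"
      using load_triple_res[OF _ Y_Players] triple_res_ge[of B] by (simp add: latency_def)
  qed simp
  also have "\<dots> = (\<Sum>t\<le>3. real (card Y choose t) * real ((11 - card Y) choose (3 - t))
                  * (b * (9 - real (card Y) + 2 * real t) ^ d))"
    using sum_subsets_by_intersection[of ?M Y "\<lambda>t. b * (9 - real (card Y) + 2 * real t) ^ d"] Y card_others
    by simp
  finally show ?thesis .
qed

(* The triples through i are i plus a 2-subset of the others; group them by |B \<inter> Y|. *)
lemma triple_part_Q:
  "(\<Sum>e\<in>triple_res ` {B \<in> Triples. i \<in> B}. latency d c a b e (load (insert i Y) e))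
     = (\<Sum>t\<le>2. real (card Y choose t) * real ((11 - card Y) choose (2 - t))
                  * (b * (10 - real (card Y) + 2 * real t) ^ d))"
proof -
  let ?M = "Players - {i}"
  let ?F = "{B. B \<subseteq> ?M \<and> card B = 2}"
  have fin_M: "finite ?M" by simp
  note T = Triples_through[OF i]
  have "inj_on (\<lambda>B. triple_res (insert i B)) ?F"
  proof (rule inj_onI)
    fix B1 B2 assume B: "B1 \<in> ?F" "B2 \<in> ?F" and eq: "triple_res (insert i B1) = triple_res (insert i B2)"
    have "finite B1" "finite B2" using B finite_subset[OF _ fin_M] by auto
    then have "insert i B1 = insert i B2" using eq triple_res_eq_iff by simp
    moreover have "i \<notin> B1" "i \<notin> B2" using B by auto
    ultimately show "B1 = B2" by (metis Diff_insert_absorb)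
  qed
  then have "(\<Sum>e\<in>triple_res ` {B \<in> Triples. i \<in> B}. latency d c a b e (load (insert i Y) e))
      = (\<Sum>B\<in>?F. latency d c a b (triple_res (insert i B)) (load (insert i Y) (triple_res (insert i B))))"
    unfolding T image_image by (simp add: sum.reindex)
  also have "\<dots> = (\<Sum>B\<in>?F. b * (10 - real (card Y) + 2 * real (card (B \<inter> Y))) ^ d)"
  proof (rule sum.cong)
    fix B assume B: "B \<in> ?F"
    then have "insert i B \<in> Triples" using T by blast
    moreover have "card (insert i B \<inter> insert i Y) = card (B \<inter> Y) + 1"
    proof -
      have "insert i B \<inter> insert i Y = insert i (B \<inter> Y)" by auto
      moreover have "finite (B \<inter> Y)" "i \<notin> B \<inter> Y" using B finite_subset[OF _ fin_M] by auto
      ultimately show ?thesis by simp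
    qed
    moreover have "card (insert i Y) = card Y + 1"
      using i_notin_Y finite_subset[OF Y fin_M] by simp
    ultimately have "load (insert i Y) (triple_res (insert i B)) = 10 - real (card Y) + 2 * real (card (B \<inter> Y))"
      using load_triple_res[of "insert i B" "insert i Y"] i Y_Players by simp
    then show "latency d c a b (triple_res (insert i B)) (load (insert i Y) (triple_res (insert i B)))
        = b * (10 - real (card Y) + 2 * real (card (B \<inter> Y))) ^ d"
      using triple_res_ge[of "insert i B"] by (simp add: latency_def)
  qed simp
  also have "\<dots> = (\<Sum>t\<le>2. real (card Y choose t) * real ((11 - card Y) choose (2 - t))
                  * (b * (10 - real (card Y) + 2 * real t) ^ d))"
    using sum_subsets_by_intersection[of ?M Y "\<lambda>t. b * (10 - real (card Y) + 2 * real t) ^ d"] Y card_others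
    by simp
  finally show ?thesis .
qed

lemma player_cost_P:
  "player_cost 12 (\<lambda>_. 1) (latency d c a b) (profile Y) i = cost_P d a b (card Y)"
proof -
  have "profile Y i = P_strat i"
    using i i_notin_Y by (simp add: profile_def Players_iff)
  moreover have "pair_res i ` (Players - {i}) \<inter> triple_res ` {B \<in> Triples. i \<notin> B} = {}"
    using pair_res_ne_triple_res i by (auto simp: Players_iff)
  ultimately show ?thesis
    unfolding player_cost_def P_strat_def
    by (simp add: sum.union_disjoint finite_Triples pair_part_P triple_part_P cost_P_def)
qed

lemma player_cost_Q:
  "player_cost 12 (\<lambda>_. 1) (latency d c a b) (profile (insert i Y)) i = cost_Q d c a b (card Y)"
proof -
  let ?A = "(\<lambda>j. pair_res j i) ` (Players - {i})" and ?T = "triple_res ` {B \<in> Triples. i \<in> B}"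
  have "profile (insert i Y) i = Q_strat i"
    using i by (simp add: profile_def Players_iff)
  moreover have "?A \<inter> ?T = {}"
    using pair_res_ne_triple_res i by (auto simp: Players_iff)
  moreover have "i \<notin> ?A \<union> ?T"
    using i by (auto simp: Players_iff pair_res_def triple_res_def)
  moreover have "latency d c a b i (load (insert i Y) i) = c"
    using i by (simp add: latency_def Players_iff)
  ultimately show ?thesis
    unfolding player_cost_def Q_strat_def
    by (simp add: sum.union_disjoint finite_Triples pair_part_Q triple_part_Q cost_Q_def add.assoc)
qed

end

lemma own_resource_distinguishes: "i \<in> Players \<Longrightarrow> i \<in> Q_strat i \<and> i \<notin> P_strat i"
  by (auto simp: Q_strat_def P_strat_def Players_iff pair_res_def triple_res_def)

lemma profiles_eq: "profiles 12 strategies = profile ` Pow Players"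
proof (rule set_eqI, rule iffI)
  fix S assume S: "S \<in> profiles 12 strategies"
  have "S = profile {i \<in> Players. S i = Q_strat i}"
  proof
    fix i
    show "S i = profile {i \<in> Players. S i = Q_strat i} i"
    proof (cases "i < 12")
      case True
      then have "S i = P_strat i \<or> S i = Q_strat i"
        using S unfolding profiles_def strategies_def by auto
      then show ?thesis
        using True own_resource_distinguishes[of i] unfolding profile_def by (auto simp: Players_iff)
    qed (use S in \<open>simp add: profiles_def profile_def\<close>)
  qed
  then show "S \<in> profile ` Pow Players" by blast
next
  fix S assume "S \<in> profile ` Pow Players"
  then obtain X where "S = profile X" by blast
  then show "S \<in> profiles 12 strategies"
    by (simp add: profiles_def profile_def strategies_def)
qed

lemma profile_update:
  assumes "i \<in> Players"
  shows "(profile X)(i := P_strat i) = profile (X - {i})"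
    and "(profile X)(i := Q_strat i) = profile (insert i X)"
  using assms by (auto simp: profile_def Players_iff fun_eq_iff)

lemma SUM_cost_profile:
  "SUM_cost 12 (\<lambda>_. 1) lat (profile X) = (\<Sum>i\<in>Players. player_cost 12 (\<lambda>_. 1) lat (profile X) i)"
  unfolding SUM_cost_def Players_def ..

lemma SUM_cost_all_P:
  "SUM_cost 12 (\<lambda>_. 1) (latency d c a b) (profile {}) = 12 * cost_P d a b 0"
  unfolding SUM_cost_profile using player_cost_P[of _ "{}"] by simp

lemma SUM_cost_all_Q:
  "SUM_cost 12 (\<lambda>_. 1) (latency d c a b) (profile Players) = 12 * cost_Q d c a b 11"
proof -
  have "player_cost 12 (\<lambda>_. 1) (latency d c a b) (profile Players) i = cost_Q d c a b 11"
    if i: "i \<in> Players" for i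
    using player_cost_Q[OF i, of "Players - {i}"] i by (simp add: insert_absorb)
  then show ?thesis unfolding SUM_cost_profile by simp
qed

context
  fixes d :: nat and c a b :: real
  assumes dominance: "\<And>k. k \<le> 11 \<Longrightarrow> 0 < cost_P d a b k \<and> cost_P d a b k < cost_Q d c a b k"
begin

(* Switching to P_strat moves the player from cost_Q k to the smaller cost_P k. *)
lemma P_strictly_dominant:
  assumes "S \<in> profiles 12 strategies" "i < 12" "t \<in> strategies i" "t \<noteq> P_strat i"
  shows "player_cost 12 (\<lambda>_. 1) (latency d c a b) (S(i := P_strat i)) i
       < player_cost 12 (\<lambda>_. 1) (latency d c a b) (S(i := t)) i"
proof -
  obtain X where X: "X \<subseteq> Players" "S = profile X"
    using assms(1) unfolding profiles_eq by blast
  have i: "i \<in> Players" using assms(2) by (simp add: Players_iff)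
  have t: "t = Q_strat i" using assms(3,4) unfolding strategies_def by auto
  have Y: "X - {i} \<subseteq> Players - {i}" using X by blast
  have "insert i (X - {i}) = insert i X" by simp
  then show ?thesis
    unfolding X(2) t profile_update[OF i]
    using player_cost_P[OF i Y] player_cost_Q[OF i Y] dominance card_others(2)[OF i Y]
    by metis
qed

(* Every player's cost, hence every social cost, is positive; this makes OPT positive. *)
lemma player_cost_pos:
  assumes "X \<subseteq> Players" "i \<in> Players"
  shows "0 < player_cost 12 (\<lambda>_. 1) (latency d c a b) (profile X) i"
proof (cases "i \<in> X")
  case True
  have Y: "X - {i} \<subseteq> Players - {i}" using assms by blast
  then show ?thesis
    using player_cost_Q[OF assms(2) Y] dominance[OF card_others(2)[OF assms(2) Y]] True
    by (simp add: insert_absorb)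
next
  case False
  then have Y: "X \<subseteq> Players - {i}" using assms by blast
  then show ?thesis
    using player_cost_P[OF assms(2) Y] dominance[OF card_others(2)[OF assms(2) Y]] by simp
qed

lemma SUM_cost_pos:
  assumes "X \<subseteq> Players"
  shows "0 < SUM_cost 12 (\<lambda>_. 1) (latency d c a b) (profile X)"
proof -
  have "(0::nat) \<in> Players" by (simp add: Players_iff)
  then have "Players \<noteq> {}" by blast
  then show ?thesis
    unfolding SUM_cost_profile using player_cost_pos[OF assms] by (intro sum_pos) auto
qed

lemma PoS_construction:
  "cost_P d a b 0 / cost_Q d c a b 11 \<le> PoS 12 (\<lambda>_. 1) strategies (latency d c a b)"
  "is_PNE 12 (\<lambda>_. 1) strategies (latency d c a b) (profile {})"
proof -
  have p: "profile {} \<in> profiles 12 strategies" unfolding profiles_eq by blast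
  have dom: "player_cost 12 (\<lambda>_. 1) (latency d c a b) (S(i := profile {} i)) i
            < player_cost 12 (\<lambda>_. 1) (latency d c a b) (S(i := t)) i"
    if "S \<in> profiles 12 strategies" "i < 12" "t \<in> strategies i" "t \<noteq> profile {} i" for S i t
    using P_strictly_dominant[OF that(1-3)] that(2,4) by (simp add: profile_def)
  show PNE: "is_PNE 12 (\<lambda>_. 1) strategies (latency d c a b) (profile {})"
    by (rule PNE_of_strictly_dominant(1)[OF p dom])
  have "SUM_cost 12 (\<lambda>_. 1) (latency d c a b) (profile {})
      / SUM_cost 12 (\<lambda>_. 1) (latency d c a b) (profile Players)
      \<le> PoS 12 (\<lambda>_. 1) strategies (latency d c a b)"
  proof (rule PoS_lower_bound[OF _ PNE PNE_of_strictly_dominant(2)[OF p dom]])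
    show "finite (profiles 12 strategies)" unfolding profiles_eq by simp
    show "profile Players \<in> profiles 12 strategies" unfolding profiles_eq by blast
    show "0 < SUM_cost 12 (\<lambda>_. 1) (latency d c a b) S" if "S \<in> profiles 12 strategies" for S
      using that SUM_cost_pos unfolding profiles_eq by blast
  qed
  then show "cost_P d a b 0 / cost_Q d c a b 11 \<le> PoS 12 (\<lambda>_. 1) strategies (latency d c a b)"
    unfolding SUM_cost_all_P SUM_cost_all_Q by simp
qed

end

lemma resources_game:
  assumes "0 \<le> c" "0 \<le> a" "0 \<le> b"
  shows "congestion_game 12 (\<lambda>_. 1) resources strategies (latency d c a b)"
  unfolding congestion_game_def
proof (intro conjI allI impI ballI)
  show "finite resources" unfolding resources_def using finite_Triples by simp
next
  fix i :: nat assume i: "i < 12"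
  show "0 < (1::real)" "strategies i \<noteq> {}" "finite (strategies i)"
    unfolding strategies_def by auto
  fix s assume "s \<in> strategies i"
  then show "s \<subseteq> resources"
    using i unfolding strategies_def P_strat_def Q_strat_def resources_def
    by (force simp: Players_iff)
next
  fix e x assume "(0::real) \<le> x"
  then show "0 \<le> latency d c a b e x" unfolding latency_def using assms by auto
qed

lemma resources_poly_latencies:
  assumes "0 \<le> c" "0 \<le> a" "0 \<le> b"
  shows "poly_latencies d resources (latency d c a b)"
proof (rule poly_latencies_monomials)
  fix e
  show "\<exists>co j. 0 \<le> co \<and> j \<le> d \<and> (\<forall>x\<ge>0. latency d c a b e x = co * x ^ j)"
  proof (cases "e < 12")
    case True
    then show ?thesis using assms by (intro exI[of _ c] exI[of _ 0]) (simp add: latency_def)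
  next
    case False
    then show ?thesis using assms
      by (intro exI[of _ "if e < 156 then a else b"] exI[of _ d]) (simp add: latency_def)
  qed
qed

lemma nat_le_11_cases:
  "(k::nat) \<le> 11 \<Longrightarrow> k = 0 \<or> k = 1 \<or> k = 2 \<or> k = 3 \<or> k = 4 \<or> k = 5 \<or> k = 6 \<or> k = 7 \<or> k = 8 \<or> k = 9 \<or> k = 10 \<or> k = 11"
  by presburger

lemma dominance_quadratic:
  "k \<le> 11 \<Longrightarrow> 0 < cost_P 2 260 3 k \<and> cost_P 2 260 3 k < cost_Q 2 15016 260 3 k"
  by (drule nat_le_11_cases, unfold cost_P_def cost_Q_def, elim disjE; hypsubst, code_simp)

lemma ratio_quadratic: "2.1859 \<le> cost_P 2 260 3 0 / cost_Q 2 15016 260 3 11"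
  unfolding cost_P_def cost_Q_def by code_simp

lemma dominance_cubic:
  "k \<le> 11 \<Longrightarrow> 0 < cost_P 3 5125 14 k \<and> cost_P 3 5125 14 k < cost_Q 3 521676 5125 14 k"
  by (drule nat_le_11_cases, unfold cost_P_def cost_Q_def, elim disjE; hypsubst, code_simp)

lemma ratio_cubic: "2.7558 \<le> cost_P 3 5125 14 0 / cost_Q 3 521676 5125 14 11"
  unfolding cost_P_def cost_Q_def by code_simp

lemma PoS_witness:
  assumes nonneg: "0 \<le> c" "0 \<le> a" "0 \<le> b"
    and dominance: "\<And>k. k \<le> 11 \<Longrightarrow> 0 < cost_P d a b k \<and> cost_P d a b k < cost_Q d c a b k"
    and R: "R \<le> cost_P d a b 0 / cost_Q d c a b 11"
  shows "\<exists>n w E Sig lat. congestion_game n w E Sig lat \<and> unweighted n w \<and>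
            poly_latencies d E lat \<and> (\<exists>S. is_PNE n w Sig lat S) \<and> PoS n w Sig lat \<ge> R"
  using resources_game[OF nonneg] resources_poly_latencies[OF nonneg] PoS_construction[OF dominance] R
  by (intro exI[of _ 12] exI[of _ "\<lambda>_. 1"] exI[of _ resources] exI[of _ strategies]
      exI[of _ "latency d c a b"]) (auto simp: unweighted_def)

theorem mainTheorem13:
  fixes \<delta> :: real
  assumes "\<delta> > 0"
  shows "(\<exists>n w E Sig lat. congestion_game n w E Sig lat \<and> unweighted n w \<and>
            poly_latencies 2 E lat \<and> (\<exists>S. is_PNE n w Sig lat S) \<and>
            PoS n w Sig lat \<ge> 2.1859 - \<delta>) \<and>
         (\<exists>n w E Sig lat. congestion_game n w E Sig lat \<and> unweighted n w \<and>
            poly_latencies 3 E lat \<and> (\<exists>S. is_PNE n w Sig lat S) \<and>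
            PoS n w Sig lat \<ge> 2.7558 - \<delta>)"
proof -
  have "2.1859 - \<delta> \<le> cost_P 2 260 3 0 / cost_Q 2 15016 260 3 11"
    using ratio_quadratic assms by linarith
  moreover have "2.7558 - \<delta> \<le> cost_P 3 5125 14 0 / cost_Q 3 521676 5125 14 11"
    using ratio_cubic assms by linarith
  ultimately show ?thesis
    using PoS_witness[OF _ _ _ dominance_quadratic] PoS_witness[OF _ _ _ dominance_cubic] by simp
qed

end
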